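(* Let $k\ge 1$ be an integer, let $H$ be a multigraph with feedback vertex number at most $k$ in which every vertex has degree at least 3, and let $B\subseteq V(H)$ be a $k$-significant subset of vertices of $H$. Then the feedback vertex number of $H-B$ is at most $k-1$.
   Context: Multigraphs are undirected and may contain parallel edges and self-loops; a self-loop is a cycle of length one and two parallel edges form a cycle of length two; the degree of a vertex is the number of incident edges, with self-loops counted twice. The feedback vertex number is the minimum number of vertices whose removal leaves an acyclic multigraph. A subset $B\subseteq V(H)$ is $k$-significant if $|B|\le 12k$ and $B$ contains every vertex of $H$ of degree at least $|E(H)|/(3k)$. *)

theory Defs
  imports Complex_Main "HOL-Library.Multiset" "HOL-Library.Uprod"
begin

text \<open>A finite multigraph is a pair (V, E) of a vertex set V and a multiset E of
unordered pairs of vertices (edges); Upair v v is a self-loop, and an edge of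
multiplicity m stands for m parallel edges.\<close>

definition multigraph :: "'a set \<Rightarrow> 'a uprod multiset \<Rightarrow> bool" where
  "multigraph V E \<longleftrightarrow> finite V \<and> (\<forall>e \<in># E. set_uprod e \<subseteq> V)"

definition degree :: "'a uprod multiset \<Rightarrow> 'a \<Rightarrow> nat" where
  "degree E v = sum_mset (image_mset
     (\<lambda>e. if e = Upair v v then 2 else if v \<in> set_uprod e then 1 else 0) E)"

text \<open>A cycle: a nonempty list of distinct vertices v_0..v_(n-1) together with n
distinct edges (as a sub-multiset of E) joining v_i and v_((i+1) mod n).
n = 1 is a self-loop, n = 2 a pair of parallel edges.\<close>
definition cycle_edges :: "'a list \<Rightarrow> 'a uprod multiset" where
  "cycle_edges vs = mset (map (\<lambda>i. Upair (vs ! i) (vs ! ((i + 1) mod length vs)))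
                              [0..<length vs])"

definition has_cycle :: "'a set \<Rightarrow> 'a uprod multiset \<Rightarrow> bool" where
  "has_cycle V E \<longleftrightarrow> (\<exists>vs. vs \<noteq> [] \<and> distinct vs \<and> set vs \<subseteq> V \<and> cycle_edges vs \<subseteq># E)"

definition acyclic_mg :: "'a set \<Rightarrow> 'a uprod multiset \<Rightarrow> bool" where
  "acyclic_mg V E \<longleftrightarrow> \<not> has_cycle V E"

definition del_verts_E :: "'a set \<Rightarrow> 'a uprod multiset \<Rightarrow> 'a uprod multiset" where
  "del_verts_E S E = filter_mset (\<lambda>e. set_uprod e \<inter> S = {}) E"

definition fvn :: "'a set \<Rightarrow> 'a uprod multiset \<Rightarrow> nat" where
  "fvn V E = Min {card S | S. S \<subseteq> V \<and> acyclic_mg (V - S) (del_verts_E S E)}"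

definition k_significant :: "nat \<Rightarrow> 'a set \<Rightarrow> 'a uprod multiset \<Rightarrow> 'a set \<Rightarrow> bool" where
  "k_significant k V E B \<longleftrightarrow> B \<subseteq> V \<and> card B \<le> 12 * k \<and>
     (\<forall>v \<in> V. real (degree E v) \<ge> real (size E) / (3 * real k) \<longrightarrow> v \<in> B)"

end

theory Submission
  imports Defs
begin

text \<open>Take a minimum feedback vertex set X, so |X| \<le> k. If X meets B, then X - B is a
feedback vertex set of H - B with fewer than k vertices. Otherwise every vertex of X has
degree below m/(3k), where m = |E(H)|, so fewer than m/3 edges meet X. But H - X is a forest,
so it has fewer edges than vertices, while each of its vertices has degree at least 3 in H;
counting edge ends at the vertices of H - X shows that more than half of the m edges meet X.\<close>

lemma mset_subseteq_if_distinct: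
  assumes "distinct xs" "set xs \<subseteq> set_mset M"
  shows "mset xs \<subseteq># M"
proof -
  have "mset xs = mset_set (set xs)" using assms(1) by (simp add: mset_set_set)
  also have "\<dots> \<subseteq># mset_set (set_mset M)" using assms(2) by (simp add: subset_imp_msubset_mset_set)
  also have "\<dots> \<subseteq># M" by (rule mset_set_set_mset_msubset)
  finally show ?thesis .
qed

lemma Upair_commute: "Upair a b = Upair b a"
  by simp

lemma has_cycle_mono:
  assumes "has_cycle V' E'" "V' \<subseteq> V" "E' \<subseteq># E"
  shows "has_cycle V E"
  using assms unfolding has_cycle_def by (meson order_trans subset_mset.order_trans)

lemma has_cycle_loop:
  assumes "Upair u u \<in># E" "u \<in> V"
  shows "has_cycle V E"
  using assms unfolding has_cycle_def by (intro exI[of _ "[u]"]) (simp add: cycle_edges_def)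

lemma has_cycle_parallel:
  assumes "count E (Upair u w) \<ge> 2" "u \<in> V" "w \<in> V" "u \<noteq> w"
  shows "has_cycle V E"
proof -
  have "cycle_edges [u, w] = {#Upair u w, Upair u w#}"
    by (simp add: cycle_edges_def Upair_commute)
  moreover have "{#Upair u w, Upair u w#} \<subseteq># E"
    using assms(1) by (auto simp: subseteq_mset_def)
  ultimately show ?thesis
    using assms(2-4) unfolding has_cycle_def by (intro exI[of _ "[u, w]"]) auto
qed

lemma has_cycle_closed_path:
  assumes "distinct c" "length c \<ge> 3" "set c \<subseteq> V"
    and "successively (\<lambda>x y. Upair x y \<in># E) c" "Upair (last c) (hd c) \<in># E"
  shows "has_cycle V E"
proof -
  let ?n = "length c"
  have "c \<noteq> []" using assms(2) by auto
  let ?next = "\<lambda>i. (i + 1) mod ?n"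
  let ?edge = "\<lambda>i. Upair (c ! i) (c ! ?next i)"
  have next_eq: "?next i = (if i + 1 = ?n then 0 else i + 1)" if "i < ?n" for i
    using that by auto
  have next_lt: "?next i < ?n" for i
    using \<open>c \<noteq> []\<close> by simp
  have index_eq: "c ! i = c ! j \<longleftrightarrow> i = j" if "i < ?n" "j < ?n" for i j
    using assms(1) that by (simp add: nth_eq_iff_index_eq)
  have "inj_on ?edge {0..<?n}"
  proof (rule inj_onI)
    fix i j assume "i \<in> {0..<?n}" "j \<in> {0..<?n}" "?edge i = ?edge j"
    then have "(i = j \<and> ?next i = ?next j) \<or> (i = ?next j \<and> ?next i = j)"
      using index_eq[of i j] index_eq[of i "?next j"] index_eq[of "?next i" "?next j"]
        index_eq[of "?next i" j] next_lt[of i] next_lt[of j] by auto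
    then show "i = j"
      using \<open>i \<in> {0..<?n}\<close> \<open>j \<in> {0..<?n}\<close> assms(2) next_eq[of i] next_eq[of j]
      by (auto split: if_splits)
  qed
  moreover have "?edge i \<in># E" if "i < ?n" for i
  proof (cases "i + 1 = ?n")
    case True
    then have "i = ?n - 1" "?next i = 0" by simp_all
    then have "c ! i = last c" "c ! ?next i = hd c"
      using \<open>c \<noteq> []\<close> by (simp_all add: last_conv_nth hd_conv_nth)
    then show ?thesis using assms(5) by simp
  next
    case False
    then have "Suc i < ?n" using that by simp
    then show ?thesis using False successively_nth[OF assms(4)] by simp
  qed
  ultimately have "cycle_edges c \<subseteq># E"
    unfolding cycle_edges_def by (intro mset_subseteq_if_distinct) (auto simp: distinct_map)
  then show ?thesis using assms(1-3) unfolding has_cycle_def by (intro exI[of _ c]) auto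
qed

definition edges_meeting :: "'a set \<Rightarrow> 'a uprod multiset \<Rightarrow> 'a uprod multiset" where
  "edges_meeting S E = filter_mset (\<lambda>e. set_uprod e \<inter> S \<noteq> {}) E"

lemma del_verts_E_plus_edges_meeting: "del_verts_E S E + edges_meeting S E = E"
  unfolding del_verts_E_def edges_meeting_def by (rule multiset_partition[symmetric])

lemma multigraph_del_verts: "multigraph V E \<Longrightarrow> multigraph (V - S) (del_verts_E S E)"
  by (auto simp: multigraph_def del_verts_E_def)

definition mg_path :: "'a set \<Rightarrow> 'a uprod multiset \<Rightarrow> 'a list \<Rightarrow> bool" where
  "mg_path V E ps \<longleftrightarrow>
     ps \<noteq> [] \<and> distinct ps \<and> set ps \<subseteq> V \<and> successively (\<lambda>x y. Upair x y \<in># E) ps"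

lemma longest_mg_path:
  assumes "finite V" "v \<in> V"
  obtains ps where "mg_path V E ps" "\<And>qs. mg_path V E qs \<Longrightarrow> length qs \<le> length ps"
proof -
  have "mg_path V E [v]" using assms(2) by (simp add: mg_path_def)
  moreover have "length qs < card V + 1" if "mg_path V E qs" for qs
  proof -
    have "length qs = card (set qs)" using that by (simp add: mg_path_def distinct_card)
    also have "\<dots> \<le> card V" using that assms(1) by (intro card_mono) (auto simp: mg_path_def)
    finally show ?thesis by simp
  qed
  ultimately show ?thesis using that ex_has_greatest_nat[of "mg_path V E" "[v]" length] by blast
qed

lemma mg_path_chord_has_cycle:
  assumes "mg_path V E (u # ps)" "Upair u w \<in># E" "w \<in> set ps" "w \<noteq> hd ps"
  shows "has_cycle V E"
proof -
  obtain j where j: "j < length ps" "ps ! j = w" using assms(3) by (auto simp: in_set_conv_nth)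
  with assms(4) have "j \<noteq> 0" by (metis hd_conv_nth list.size(3) not_less0)
  define c where "c = take (j + 2) (u # ps)"
  have "successively (\<lambda>x y. Upair x y \<in># E) (c @ drop (j + 2) (u # ps))"
    using assms(1) by (simp add: c_def mg_path_def)
  then have "successively (\<lambda>x y. Upair x y \<in># E) c"
    by (simp add: successively_append_iff)
  moreover have "Upair (last c) (hd c) \<in># E"
  proof -
    have "last c = w" "hd c = u"
      using j by (auto simp: c_def last_conv_nth)
    then show ?thesis using assms(2) by (simp add: Upair_commute)
  qed
  ultimately show ?thesis
    using assms(1) j \<open>j \<noteq> 0\<close>
    by (intro has_cycle_closed_path[of c])
       (auto simp: c_def mg_path_def dest: in_set_takeD)
qed

text \<open>An edge at the first vertex of a longest path that does not go to the second vertex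
would extend the path or close a cycle.\<close>

lemma longest_mg_path_first_edge:
  assumes "multigraph V E" "\<not> has_cycle V E" "mg_path V E (u # rest)"
    and longest: "\<And>qs. mg_path V E qs \<Longrightarrow> length qs \<le> length (u # rest)"
    and "e \<in># edges_meeting {u} E"
  shows "rest \<noteq> [] \<and> e = Upair u (hd rest)"
proof -
  have "u \<in> V" using assms(3) by (simp add: mg_path_def)
  have "e \<in># E" "u \<in> set_uprod e" using assms(5) by (auto simp: edges_meeting_def)
  have "\<exists>w. e = Upair u w" using \<open>u \<in> set_uprod e\<close> by (cases e) auto
  then obtain w where e: "e = Upair u w" by blast
  have "w \<in> V" using assms(1) \<open>e \<in># E\<close> by (auto simp: multigraph_def e)
  have "w \<noteq> u"
  proof
    assume "w = u"
    then have "Upair u u \<in># E" using \<open>e \<in># E\<close> e by simp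
    then show False using assms(2) has_cycle_loop \<open>u \<in> V\<close> by metis
  qed
  have "w \<in> set rest"
  proof (rule ccontr)
    assume "w \<notin> set rest"
    moreover have "Upair w u \<in># E" using \<open>e \<in># E\<close> e Upair_commute by metis
    ultimately have "mg_path V E (w # u # rest)"
      using assms(3) \<open>w \<in> V\<close> \<open>w \<noteq> u\<close> by (auto simp: mg_path_def)
    then show False using longest by fastforce
  qed
  moreover have "w = hd rest"
    using mg_path_chord_has_cycle[of V E u rest w] assms(2,3) \<open>e \<in># E\<close> \<open>w \<in> set rest\<close>
    by (auto simp: e)
  ultimately show ?thesis using e by auto
qed

lemma acyclic_has_leaf:
  assumes "multigraph V E" "V \<noteq> {}" "\<not> has_cycle V E"
  obtains u where "u \<in> V" "size (edges_meeting {u} E) \<le> 1"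
proof -
  obtain v where "v \<in> V" using assms(2) by blast
  moreover have "finite V" using assms(1) by (simp add: multigraph_def)
  ultimately obtain ps where longest: "mg_path V E ps"
    "\<And>qs. mg_path V E qs \<Longrightarrow> length qs \<le> length ps"
    using longest_mg_path[of V v E] by blast
  then obtain u rest where ps: "ps = u # rest" by (cases ps) (auto simp: mg_path_def)
  note edge_at_u = longest_mg_path_first_edge[OF assms(1,3) longest[unfolded ps]]
  have "u \<in> V" using longest(1) ps by (simp add: mg_path_def)
  have "size (edges_meeting {u} E) \<le> 1"
  proof (rule ccontr)
    let ?M = "edges_meeting {u} E"
    assume "\<not> size ?M \<le> 1"
    then have "?M \<noteq> {#}" by auto
    then obtain e where "e \<in># ?M" by blast
    then have "rest \<noteq> []" using edge_at_u by blast
    then have "hd rest \<in> V" "hd rest \<noteq> u"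
      using longest(1) by (auto simp: mg_path_def ps)
    have "set_mset ?M \<subseteq> {Upair u (hd rest)}" using edge_at_u by blast
    then have "size ?M = count ?M (Upair u (hd rest))"
      using set_mset_subset_singletonD by (metis count_replicate_mset)
    also have "\<dots> \<le> count E (Upair u (hd rest))" by (simp add: edges_meeting_def)
    finally have "2 \<le> count E (Upair u (hd rest))"
      using \<open>\<not> size ?M \<le> 1\<close> by linarith
    then show False
      using has_cycle_parallel \<open>u \<in> V\<close> \<open>hd rest \<in> V\<close> \<open>hd rest \<noteq> u\<close> assms(3) by metis
  qed
  with \<open>u \<in> V\<close> show ?thesis by (rule that)
qed

lemma acyclic_size_less_card:
  assumes "multigraph V E" "V \<noteq> {}" "\<not> has_cycle V E"
  shows "size E < card V"
proof -
  have "finite V" using assms(1) by (simp add: multigraph_def)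
  then show ?thesis using assms
  proof (induction V arbitrary: E rule: finite_psubset_induct)
    case (psubset V)
    obtain u where "u \<in> V" and leaf: "size (edges_meeting {u} E) \<le> 1"
      using acyclic_has_leaf psubset.prems by blast
    let ?E' = "del_verts_E {u} E"
    have split: "size E = size ?E' + size (edges_meeting {u} E)"
      by (metis del_verts_E_plus_edges_meeting size_union)
    show ?case
    proof (cases "V = {u}")
      case True
      have "e = Upair u u" if "e \<in># E" for e
        using that psubset.prems(1) True by (cases e) (auto simp: multigraph_def)
      then have "E = {#}"
        using has_cycle_loop psubset.prems(3) \<open>u \<in> V\<close> by (metis multiset_nonemptyE)
      then show ?thesis using True by simp
    next
      case False
      have "multigraph (V - {u}) ?E'" using psubset.prems(1) by (rule multigraph_del_verts)
      moreover have "\<not> has_cycle (V - {u}) ?E'"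
        using psubset.prems(3) has_cycle_mono[of "V - {u}" ?E' V E]
        by (auto simp: del_verts_E_def)
      ultimately have "size ?E' < card (V - {u})"
        using psubset.IH[of "V - {u}"] False \<open>u \<in> V\<close> by blast
      then show ?thesis using split leaf \<open>u \<in> V\<close> psubset.hyps by (simp add: card_Diff_singleton)
    qed
  qed
qed

definition incidence :: "'a \<Rightarrow> 'a uprod \<Rightarrow> nat" where
  "incidence v e = (if e = Upair v v then 2 else if v \<in> set_uprod e then 1 else 0)"

lemma sum_incidence_Upair:
  assumes "finite A"
  shows "(\<Sum>v\<in>A. incidence v (Upair a b)) = of_bool (a \<in> A) + of_bool (b \<in> A)"
proof -
  have "incidence v (Upair a b) = of_bool (v = a) + of_bool (v = b)" for v
    by (auto simp: incidence_def)
  then show ?thesis using assms by (simp add: sum.distrib)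
qed

lemma degree_eq_sum_incidence: "degree E v = (\<Sum>e\<in>#E. incidence v e)"
  by (simp add: degree_def incidence_def)

lemma sum_degree_eq_sum_incidence:
  "(\<Sum>v\<in>A. degree E v) = (\<Sum>e\<in>#E. \<Sum>v\<in>A. incidence v e)"
  by (induction E) (simp_all add: degree_eq_sum_incidence sum.distrib)

lemma sum_mset_split_edges:
  "(\<Sum>e\<in>#E. f e) = (\<Sum>e\<in>#del_verts_E S E. f e) + (\<Sum>e\<in>#edges_meeting S E. f e)"
  by (metis del_verts_E_plus_edges_meeting image_mset_union sum_mset.union)

lemma sum_degree_outside_le:
  assumes "multigraph V E"
  shows "(\<Sum>v\<in>V - S. degree E v) \<le> 2 * size (del_verts_E S E) + size (edges_meeting S E)"
proof -
  have "finite (V - S)" using assms by (simp add: multigraph_def)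
  have inside: "(\<Sum>v\<in>V - S. incidence v e) = 2" if "e \<in># del_verts_E S E" for e
    using that assms \<open>finite (V - S)\<close>
    by (cases e) (auto simp: sum_incidence_Upair multigraph_def del_verts_E_def)
  have meeting: "(\<Sum>v\<in>V - S. incidence v e) \<le> 1" if "e \<in># edges_meeting S E" for e
    using that \<open>finite (V - S)\<close>
    by (cases e) (auto simp: sum_incidence_Upair edges_meeting_def)
  have "(\<Sum>v\<in>V - S. degree E v)
      = (\<Sum>e\<in>#del_verts_E S E. \<Sum>v\<in>V - S. incidence v e)
        + (\<Sum>e\<in>#edges_meeting S E. \<Sum>v\<in>V - S. incidence v e)"
    by (simp add: sum_degree_eq_sum_incidence sum_mset_split_edges[of _ E S])
  also have "\<dots> \<le> (\<Sum>e\<in>#del_verts_E S E. 2) + (\<Sum>e\<in>#edges_meeting S E. 1)"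
    using inside meeting by (intro add_mono sum_mset_mono) auto
  finally show ?thesis by simp
qed

lemma size_edges_meeting_le_sum_degree:
  assumes "finite S"
  shows "size (edges_meeting S E) \<le> (\<Sum>v\<in>S. degree E v)"
proof -
  have meeting: "1 \<le> (\<Sum>v\<in>S. incidence v e)" if "e \<in># edges_meeting S E" for e
    using that assms by (cases e) (auto simp: sum_incidence_Upair edges_meeting_def)
  have "size (edges_meeting S E) = (\<Sum>e\<in>#edges_meeting S E. 1)" by simp
  also have "\<dots> \<le> (\<Sum>e\<in>#edges_meeting S E. \<Sum>v\<in>S. incidence v e)"
    using meeting by (rule sum_mset_mono)
  also have "\<dots> \<le> (\<Sum>e\<in>#E. \<Sum>v\<in>S. incidence v e)"
    using sum_mset_split_edges[of "\<lambda>e. \<Sum>v\<in>S. incidence v e" E S] by simp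
  finally show ?thesis by (simp add: sum_degree_eq_sum_incidence)
qed

lemma size_less_twice_edges_meeting_fvs:
  assumes "multigraph V E" "V \<noteq> {}" "\<forall>v\<in>V. degree E v \<ge> 3"
    and "acyclic_mg (V - X) (del_verts_E X E)"
  shows "size E < 2 * size (edges_meeting X E)"
proof -
  let ?D = "del_verts_E X E" and ?I = "edges_meeting X E"
  have split: "size E = size ?D + size ?I"
    by (metis del_verts_E_plus_edges_meeting size_union)
  have forest: "multigraph (V - X) ?D"
    using assms(1) by (rule multigraph_del_verts)
  show ?thesis
  proof (cases "V - X = {}")
    case True
    have "set_uprod e \<noteq> {}" for e :: "'a uprod" by (cases e) simp
    with forest True have "?D = {#}"
      by (metis multigraph_def multiset_nonemptyE subset_empty)
    moreover have "E \<noteq> {#}" using assms(2,3) by (auto simp: degree_def)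
    ultimately show ?thesis using split by (simp add: nonempty_has_size)
  next
    case False
    have "3 * card (V - X) = (\<Sum>v\<in>V - X. 3)" by simp
    also have "\<dots> \<le> (\<Sum>v\<in>V - X. degree E v)" using assms(3) by (intro sum_mono) auto
    also have "\<dots> \<le> 2 * size ?D + size ?I" using assms(1) by (rule sum_degree_outside_le)
    finally have "3 * card (V - X) \<le> 2 * size ?D + size ?I" .
    moreover have "size ?D < card (V - X)"
      using acyclic_size_less_card[OF forest False] assms(4) by (simp add: acyclic_mg_def)
    ultimately show ?thesis using split by linarith
  qed
qed

lemma small_fvs_meets_significant:
  assumes "k \<ge> 1" "multigraph V E" "V \<noteq> {}" "\<forall>v\<in>V. degree E v \<ge> 3"
    and "k_significant k V E B"
    and "X \<subseteq> V" "card X \<le> k" "acyclic_mg (V - X) (del_verts_E X E)"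
  shows "X \<inter> B \<noteq> {}"
proof
  assume disjoint: "X \<inter> B = {}"
  let ?m = "real (size E)" and ?I = "edges_meeting X E"
  have "finite X" using assms(2,6) finite_subset by (auto simp: multigraph_def)
  have majority: "size E < 2 * size ?I"
    using size_less_twice_edges_meeting_fvs assms(2,3,4,8) by blast
  have incident: "size ?I \<le> (\<Sum>v\<in>X. degree E v)"
    using \<open>finite X\<close> by (rule size_edges_meeting_le_sum_degree)
  have "X \<noteq> {}" using majority incident by auto
  have low_degree: "real (degree E v) < ?m / (3 * real k)" if "v \<in> X" for v
    using that disjoint assms(5,6) by (force simp: k_significant_def)
  have "real (size ?I) \<le> (\<Sum>v\<in>X. real (degree E v))"
    using incident by (metis of_nat_le_iff of_nat_sum)
  also have "\<dots> < (\<Sum>v\<in>X. ?m / (3 * real k))"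
    using \<open>finite X\<close> \<open>X \<noteq> {}\<close> low_degree by (rule sum_strict_mono)
  also have "\<dots> = real (card X) * (?m / (3 * real k))" by simp
  also have "\<dots> \<le> real k * (?m / (3 * real k))"
    using assms(7) by (intro mult_right_mono) auto
  also have "\<dots> = ?m / 3" using assms(1) by simp
  finally show False using majority by simp
qed

lemma finite_fvs_cards:
  assumes "finite V"
  shows "finite {card S | S. S \<subseteq> V \<and> acyclic_mg (V - S) (del_verts_E S E)}"
  by (rule finite_subset[of _ "card ` Pow V"]) (auto simp: assms)

lemma fvn_le:
  assumes "finite V" "S \<subseteq> V" "acyclic_mg (V - S) (del_verts_E S E)"
  shows "fvn V E \<le> card S"
  unfolding fvn_def using assms by (intro Min_le finite_fvs_cards) auto

lemma fvn_attained:
  assumes "finite V"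
  obtains S where "S \<subseteq> V" "acyclic_mg (V - S) (del_verts_E S E)" "card S = fvn V E"
proof -
  have "acyclic_mg (V - V) (del_verts_E V E)" by (simp add: acyclic_mg_def has_cycle_def)
  then have "fvn V E \<in> {card S | S. S \<subseteq> V \<and> acyclic_mg (V - S) (del_verts_E S E)}"
    unfolding fvn_def using assms by (intro Min_in finite_fvs_cards) auto
  then show ?thesis using that by auto
qed

lemma fvn_del_verts_le:
  assumes "finite V" "X \<subseteq> V" "acyclic_mg (V - X) (del_verts_E X E)"
  shows "fvn (V - B) (del_verts_E B E) \<le> card (X - B)"
proof (rule fvn_le)
  have "del_verts_E (X - B) (del_verts_E B E) \<subseteq># del_verts_E X E"
    unfolding del_verts_E_def by (rule mset_subset_eqI) auto
  then show "acyclic_mg (V - B - (X - B)) (del_verts_E (X - B) (del_verts_E B E))"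
    using assms(3) has_cycle_mono[of "V - B - (X - B)" _ "V - X"]
    unfolding acyclic_mg_def by blast
qed (use assms in auto)

theorem corollary6p2:
  fixes k :: nat and V :: "'a set" and E :: "'a uprod multiset" and B :: "'a set"
  assumes "k \<ge> 1"
    and "multigraph V E"
    and "fvn V E \<le> k"
    and "\<forall>v \<in> V. degree E v \<ge> 3"
    and "k_significant k V E B"
  shows "fvn (V - B) (del_verts_E B E) \<le> k - 1"
proof -
  have "finite V" using assms(2) by (simp add: multigraph_def)
  then obtain X where X: "X \<subseteq> V" "acyclic_mg (V - X) (del_verts_E X E)" "card X = fvn V E"
    by (rule fvn_attained)
  have "card (X - B) \<le> k - 1"
  proof (cases "V = {}")
    case True
    then show ?thesis using X(1) by simp
  next
    case False
    then have "X \<inter> B \<noteq> {}"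
      using small_fvs_meets_significant[OF assms(1,2) False assms(4,5) X(1) _ X(2)] X(3) assms(3)
      by simp
    then have "card (X - B) < card X"
      using \<open>finite V\<close> X(1) by (intro psubset_card_mono) (auto intro: finite_subset)
    then show ?thesis using X(3) assms(3) by linarith
  qed
  moreover have "fvn (V - B) (del_verts_E B E) \<le> card (X - B)"
    using \<open>finite V\<close> X(1,2) by (rule fvn_del_verts_le)
  ultimately show ?thesis by linarith
qed

end
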